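(* Let \[ P(z,\bar z)=\sum_{k=0}^n\sum_{j=0}^k\alpha_{j,k-j}z^j\bar z^{\,k-j} \] be a polyanalytic polynomial of degree $n$ such that there exists $\ell\in\{0,1,\ldots,n\}$ with \[ \alpha_n := |\alpha_{\ell,n-\ell}|-\sum_{j=0,\,j\neq\ell}^n|\alpha_{j,n-j}|>0. \] Define the real polynomial \[ q(t)=t^n-\sum_{k=0}^{n-1}c_kt^k,\qquad c_k=\sum_{j=0}^k\frac{|\alpha_{j,k-j}|}{\alpha_n},\quad k=0,1,\ldots,n-1. \] If not all $c_k$ are zero, then $q$ has a unique positive zero $r_0>0$; otherwise set $r_0=0$. Then: (i) every zero $z$ of $P$ satisfies $|z|\leq r_0$; (ii) $r_0\leq r_1:=\max\Bigl\{1,\sum_{k=0}^{n-1}\sum_{j=0}^k\frac{|\alpha_{j,k-j}|}{\alpha_n}\Bigr\}$ and $r_0\leq r_2:=1+\max\Bigl\{\sum_{j=0}^k\frac{|\alpha_{j,k-j}|}{\alpha_n}:k=0,1,\ldots,n-1\Bigr\}$.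
   Context: A polyanalytic polynomial is a function $\mathbb{C}\to\mathbb{C}$ of the form given, with complex coefficients $\alpha_{j,k-j}$; its degree is the largest $k$ such that some $\alpha_{j,k-j}\neq 0$. A zero of $P$ is a point $z\in\mathbb{C}$ with $P(z,\bar z)=0$. *)

theory Defs
  imports Complex_Main
begin

definition polyan :: "(nat \<Rightarrow> nat \<Rightarrow> complex) \<Rightarrow> nat \<Rightarrow> complex \<Rightarrow> complex" where
  "polyan \<alpha> n z = (\<Sum>k\<le>n. \<Sum>j\<le>k. \<alpha> j (k - j) * z ^ j * cnj z ^ (k - j))"

end

theory Submission
  imports Defs
begin

text \<open>
  If \<open>P(z) = 0\<close>, the top-degree part of \<open>P\<close> equals minus the lower-degree part. The dominant
  top coefficient bounds the norm of the former from below by \<open>\<alpha>\<^sub>n |z|^n\<close>, the triangle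
  inequality bounds the latter from above, and together this says \<open>q(|z|) \<le> 0\<close>.
  For \<open>t > 0\<close> one has \<open>q(t) = t^n (1 - \<Sum>\<^sub>k c\<^sub>k / t^(n-k))\<close>, and the sum is strictly decreasing
  in \<open>t\<close> once some \<open>c\<^sub>k\<close> is positive. Hence \<open>q\<close> has exactly one positive zero \<open>r\<^sub>0\<close>, is negative
  on \<open>(0, r\<^sub>0)\<close> and nonnegative beyond it. So \<open>|z| \<le> r\<^sub>0\<close>, and \<open>r\<^sub>0 \<le> t\<close> wherever \<open>q(t) \<ge> 0\<close>,
  which is checked directly at \<open>t = r\<^sub>1\<close> and \<open>t = r\<^sub>2\<close>.
\<close>

definition cauchy_poly :: "(nat \<Rightarrow> real) \<Rightarrow> nat \<Rightarrow> real \<Rightarrow> real" where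
  "cauchy_poly c n t = t ^ n - (\<Sum>k<n. c k * t ^ k)"

definition cauchy_ratio :: "(nat \<Rightarrow> real) \<Rightarrow> nat \<Rightarrow> real \<Rightarrow> real" where
  "cauchy_ratio c n t = (\<Sum>k<n. c k / t ^ (n - k))"

lemma cauchy_poly_eq_mult_ratio:
  assumes "t \<noteq> 0"
  shows "cauchy_poly c n t = t ^ n * (1 - cauchy_ratio c n t)"
proof -
  have "c k * t ^ k = t ^ n * (c k / t ^ (n - k))" if "k < n" for k
  proof -
    have "t ^ n = t ^ (n - k) * t ^ k" using that by (simp add: power_add[symmetric])
    then show ?thesis using assms by (simp add: field_simps)
  qed
  then have "(\<Sum>k<n. c k * t ^ k) = t ^ n * cauchy_ratio c n t"
    by (simp add: cauchy_ratio_def sum_distrib_left)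
  then show ?thesis by (simp add: cauchy_poly_def algebra_simps)
qed

lemma cauchy_poly_le_0_iff:
  assumes "t > 0"
  shows "cauchy_poly c n t \<le> 0 \<longleftrightarrow> 1 \<le> cauchy_ratio c n t"
proof -
  have "0 < t ^ n" using assms by simp
  from mult_le_cancel_left_pos[OF this, of "1 - cauchy_ratio c n t" 0] show ?thesis
    using assms by (simp add: cauchy_poly_eq_mult_ratio)
qed

lemma cauchy_poly_less_0_iff:
  assumes "t > 0"
  shows "cauchy_poly c n t < 0 \<longleftrightarrow> 1 < cauchy_ratio c n t"
proof -
  have "0 < t ^ n" using assms by simp
  from mult_less_cancel_left_pos[OF this, of "1 - cauchy_ratio c n t" 0] show ?thesis
    using assms by (simp add: cauchy_poly_eq_mult_ratio)
qed

lemma cauchy_poly_eq_0_iff: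
  assumes "t > 0"
  shows "cauchy_poly c n t = 0 \<longleftrightarrow> cauchy_ratio c n t = 1"
  using assms by (simp add: cauchy_poly_eq_mult_ratio)

lemma cauchy_ratio_strict_antimono:
  assumes "\<And>k. c k \<ge> 0" and "m < n" "c m > 0" and "0 < t" "t < s"
  shows "cauchy_ratio c n s < cauchy_ratio c n t"
  unfolding cauchy_ratio_def
proof (rule sum_strict_mono_ex1)
  show "\<forall>k\<in>{..<n}. c k / s ^ (n - k) \<le> c k / t ^ (n - k)"
    using assms by (auto intro!: divide_left_mono power_mono)
  have "t ^ (n - m) < s ^ (n - m)" using assms by (intro power_strict_mono) auto
  then have "c m / s ^ (n - m) < c m / t ^ (n - m)"
    using assms by (intro divide_strict_left_mono) auto
  then show "\<exists>k\<in>{..<n}. c k / s ^ (n - k) < c k / t ^ (n - k)" using \<open>m < n\<close> by auto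
qed simp

lemma cauchy_ratio_less_iff:
  assumes "\<And>k. c k \<ge> 0" and "m < n" "c m > 0" and "0 < s" "0 < t"
  shows "cauchy_ratio c n s < cauchy_ratio c n t \<longleftrightarrow> t < s"
  using assms cauchy_ratio_strict_antimono[of c m n s t] cauchy_ratio_strict_antimono[of c m n t s]
  by (cases s t rule: linorder_cases) auto

lemma cauchy_ratio_le_sum_div:
  assumes nonneg: "\<And>k. c k \<ge> 0" and "t \<ge> 1"
  shows "cauchy_ratio c n t \<le> (\<Sum>k<n. c k) / t"
proof -
  have "c k / t ^ (n - k) \<le> c k / t" if "k < n" for k
  proof -
    have "t ^ 1 \<le> t ^ (n - k)" using that assms by (intro power_increasing) auto
    then show ?thesis using assms nonneg[of k] by (intro divide_left_mono) auto
  qed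
  then show ?thesis
    unfolding cauchy_ratio_def sum_divide_distrib by (intro sum_mono) auto
qed

lemma cauchy_poly_max_1_sum_nonneg:
  assumes "\<And>k. c k \<ge> 0"
  shows "cauchy_poly c n (max 1 (\<Sum>k<n. c k)) \<ge> 0"
proof -
  define t where "t = max 1 (\<Sum>k<n. c k)"
  have "cauchy_ratio c n t \<le> (\<Sum>k<n. c k) / t"
    using assms by (intro cauchy_ratio_le_sum_div) (auto simp: t_def)
  also have "\<dots> \<le> 1" by (simp add: t_def)
  finally show ?thesis
    unfolding t_def[symmetric] by (simp add: cauchy_poly_eq_mult_ratio t_def)
qed

lemma cauchy_poly_1_plus_bound_ge_1:
  assumes "M \<ge> 0" and "\<And>k. k < n \<Longrightarrow> c k \<le> M"
  shows "cauchy_poly c n (1 + M) \<ge> 1"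
proof -
  have "(\<Sum>k<n. c k * (1 + M) ^ k) \<le> (\<Sum>k<n. M * (1 + M) ^ k)"
    using assms by (intro sum_mono mult_right_mono) auto
  also have "\<dots> = (1 + M) ^ n - 1"
    by (simp add: power_diff_1_eq sum_distrib_left)
  finally show ?thesis by (simp add: cauchy_poly_def)
qed

lemma cauchy_poly_pos_root_exists:
  assumes nonneg: "\<And>k. c k \<ge> 0" and "m < n" "c m > 0"
  shows "\<exists>r>0. cauchy_poly c n r = 0"
proof -
  define a where "a = min 1 (c m)"
  define b where "b = max 1 (\<Sum>k<n. c k)"
  have a: "0 < a" "a \<le> 1" using assms by (auto simp: a_def)
  have "a ^ (n - m) \<le> a ^ 1" using a \<open>m < n\<close> by (intro power_decreasing) auto
  then have "1 \<le> c m / a ^ (n - m)" using a by (simp add: a_def)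
  also have "\<dots> \<le> cauchy_ratio c n a"
    unfolding cauchy_ratio_def using nonneg a \<open>m < n\<close>
    by (intro member_le_sum[where f = "\<lambda>k. c k / a ^ (n - k)"]) auto
  finally have "cauchy_poly c n a \<le> 0" using a by (simp add: cauchy_poly_le_0_iff)
  moreover have "0 \<le> cauchy_poly c n b"
    unfolding b_def using nonneg by (rule cauchy_poly_max_1_sum_nonneg)
  moreover have "a \<le> b" using a by (simp add: b_def)
  moreover have "continuous_on {a..b} (cauchy_poly c n)"
    unfolding cauchy_poly_def by (intro continuous_intros)
  ultimately obtain r where "a \<le> r" "cauchy_poly c n r = 0"
    using IVT'[of "cauchy_poly c n" a 0 b] by auto
  then show ?thesis using a by (intro exI[of _ r]) auto
qed

locale cauchy_pos_root =
  fixes c :: "nat \<Rightarrow> real" and n m :: nat and r :: real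
  assumes nonneg: "\<And>k. c k \<ge> 0" and m: "m < n" "c m > 0"
    and root: "r > 0" "cauchy_poly c n r = 0"
begin

lemma ratio_root: "cauchy_ratio c n r = 1"
  using root by (simp add: cauchy_poly_eq_0_iff)

lemma poly_le_0_iff_le_root:
  assumes "t > 0"
  shows "cauchy_poly c n t \<le> 0 \<longleftrightarrow> t \<le> r"
proof -
  have "cauchy_ratio c n t < cauchy_ratio c n r \<longleftrightarrow> r < t"
    using nonneg m root assms by (intro cauchy_ratio_less_iff) auto
  then show ?thesis using assms by (simp add: cauchy_poly_le_0_iff ratio_root not_less flip: not_le)
qed

lemma poly_less_0_iff_less_root:
  assumes "t > 0"
  shows "cauchy_poly c n t < 0 \<longleftrightarrow> t < r"
proof -
  have "cauchy_ratio c n r < cauchy_ratio c n t \<longleftrightarrow> t < r"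
    using nonneg m root assms by (intro cauchy_ratio_less_iff) auto
  then show ?thesis using assms by (simp add: cauchy_poly_less_0_iff ratio_root)
qed

lemma pos_root_unique:
  assumes "t > 0" "cauchy_poly c n t = 0"
  shows "t = r"
proof -
  have "t \<le> r" using poly_le_0_iff_le_root[OF assms(1)] assms(2) by simp
  moreover have "\<not> t < r" using poly_less_0_iff_less_root[OF assms(1)] assms(2) by simp
  ultimately show ?thesis by simp
qed

lemma le_root:
  assumes "t \<ge> 0" "cauchy_poly c n t \<le> 0"
  shows "t \<le> r"
  using assms root poly_le_0_iff_le_root[of t] by (cases "t = 0") auto

lemma root_le:
  assumes "t > 0" "cauchy_poly c n t \<ge> 0"
  shows "r \<le> t"
  using assms poly_less_0_iff_less_root[of t] by auto

end

lemma norm_polyan_monomial: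
  assumes "j \<le> k"
  shows "norm (a * z ^ j * cnj z ^ (k - j)) = norm a * norm z ^ k"
  using assms by (simp add: norm_mult norm_power mult.assoc power_add[symmetric])

lemma norm_sum_dominant_term_ge:
  fixes w :: "'b \<Rightarrow> 'a::real_normed_vector"
  assumes "finite A" "l \<in> A"
  shows "norm (w l) - (\<Sum>j\<in>A - {l}. norm (w j)) \<le> norm (\<Sum>j\<in>A. w j)"
proof -
  have "(\<Sum>j\<in>A. w j) = w l + (\<Sum>j\<in>A - {l}. w j)"
    using assms by (simp add: sum.remove)
  then have "norm (w l) \<le> norm (\<Sum>j\<in>A. w j) + norm (\<Sum>j\<in>A - {l}. w j)"
    by (metis add_diff_cancel_right' norm_triangle_ineq4)
  with norm_sum[of w "A - {l}"] show ?thesis by linarith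
qed

lemma polyan_zero_norm_bound:
  assumes "l \<le> n" and "polyan \<alpha> n z = 0"
  shows "(cmod (\<alpha> l (n - l)) - (\<Sum>j\<in>{0..n} - {l}. cmod (\<alpha> j (n - j)))) * cmod z ^ n
    \<le> (\<Sum>k<n. (\<Sum>j\<le>k. cmod (\<alpha> j (k - j))) * cmod z ^ k)"
proof -
  define f where "f k j = \<alpha> j (k - j) * z ^ j * cnj z ^ (k - j)" for k j
  have norm_f: "norm (f k j) = cmod (\<alpha> j (k - j)) * cmod z ^ k" if "j \<le> k" for k j
    using that by (simp add: f_def norm_polyan_monomial)
  have "polyan \<alpha> n z = (\<Sum>k<n. \<Sum>j\<le>k. f k j) + (\<Sum>j\<le>n. f n j)"
    by (simp add: polyan_def f_def lessThan_Suc_atMost[symmetric])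
  then have top_eq_low: "norm (\<Sum>j\<le>n. f n j) = norm (\<Sum>k<n. \<Sum>j\<le>k. f k j)"
    using assms(2) by (simp add: add_eq_0_iff)
  have "(cmod (\<alpha> l (n - l)) - (\<Sum>j\<in>{0..n} - {l}. cmod (\<alpha> j (n - j)))) * cmod z ^ n
      = norm (f n l) - (\<Sum>j\<in>{..n} - {l}. norm (f n j))"
    using assms(1) by (simp add: norm_f atLeast0AtMost sum_distrib_right left_diff_distrib)
  also have "\<dots> \<le> norm (\<Sum>j\<le>n. f n j)"
    using assms(1) by (intro norm_sum_dominant_term_ge) auto
  also have "\<dots> \<le> (\<Sum>k<n. norm (\<Sum>j\<le>k. f k j))"
    unfolding top_eq_low by (rule norm_sum)
  also have "\<dots> \<le> (\<Sum>k<n. \<Sum>j\<le>k. norm (f k j))"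
    by (intro sum_mono norm_sum)
  also have "\<dots> = (\<Sum>k<n. (\<Sum>j\<le>k. cmod (\<alpha> j (k - j))) * cmod z ^ k)"
    by (simp add: norm_f sum_distrib_right)
  finally show ?thesis .
qed

lemma polyan_zero_cauchy_poly_nonpos:
  fixes an :: real
  assumes "l \<le> n" and "polyan \<alpha> n z = 0"
    and an: "an = cmod (\<alpha> l (n - l)) - (\<Sum>j\<in>{0..n} - {l}. cmod (\<alpha> j (n - j)))" "an > 0"
  shows "cauchy_poly (\<lambda>k. \<Sum>j\<le>k. cmod (\<alpha> j (k - j)) / an) n (cmod z) \<le> 0"
proof -
  define c where "c k = (\<Sum>j\<le>k. cmod (\<alpha> j (k - j)) / an)" for k
  have an_c: "an * c k = (\<Sum>j\<le>k. cmod (\<alpha> j (k - j)))" for k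
    using an by (simp add: c_def sum_divide_distrib[symmetric])
  have "an * cmod z ^ n \<le> (\<Sum>k<n. an * c k * cmod z ^ k)"
    using polyan_zero_norm_bound[OF assms(1,2), folded an(1)] by (simp add: an_c)
  also have "\<dots> = an * (\<Sum>k<n. c k * cmod z ^ k)"
    by (simp add: sum_distrib_left mult.assoc)
  finally show ?thesis
    using an by (simp add: cauchy_poly_def c_def[abs_def])
qed

theorem theorem3p1:
  fixes \<alpha> :: "nat \<Rightarrow> nat \<Rightarrow> complex" and n l :: nat
    and an :: real and c :: "nat \<Rightarrow> real" and q :: "real \<Rightarrow> real"
    and r0 r1 r2 :: real
  assumes deg: "\<exists>j\<le>n. \<alpha> j (n - j) \<noteq> 0"
    and hl: "l \<le> n"
  defines "an \<equiv> cmod (\<alpha> l (n - l)) - (\<Sum>j\<in>{0..n} - {l}. cmod (\<alpha> j (n - j)))"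
  assumes an_pos: "an > 0"
  defines "c \<equiv> (\<lambda>k. \<Sum>j\<le>k. cmod (\<alpha> j (k - j)) / an)"
    and "q \<equiv> (\<lambda>t. t ^ n - (\<Sum>k<n. c k * t ^ k))"
    and "r0 \<equiv> (if (\<forall>k<n. c k = 0) then 0 else (THE r. r > 0 \<and> q r = 0))"
    and "r1 \<equiv> max 1 (\<Sum>k<n. \<Sum>j\<le>k. cmod (\<alpha> j (k - j)) / an)"
    and "r2 \<equiv> 1 + Max (insert 0 {(\<Sum>j\<le>k. cmod (\<alpha> j (k - j)) / an) | k. k < n})"
  shows "(\<not> (\<forall>k<n. c k = 0) \<longrightarrow> (\<exists>!r. r > 0 \<and> q r = 0))
    \<and> (\<forall>z. polyan \<alpha> n z = 0 \<longrightarrow> cmod z \<le> r0)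
    \<and> r0 \<le> r1 \<and> r0 \<le> r2"
proof -
  have q_eq: "q = cauchy_poly c n" unfolding q_def by (rule ext) (simp add: cauchy_poly_def)
  have c_nonneg: "\<And>k. c k \<ge> 0" unfolding c_def using an_pos by (simp add: sum_nonneg)
  have zero_bound: "q (cmod z) \<le> 0" if "polyan \<alpha> n z = 0" for z
    unfolding q_eq c_def using hl that an_pos
    by (intro polyan_zero_cauchy_poly_nonpos) (simp_all add: an_def)
  define M where "M = Max (insert 0 {(\<Sum>j\<le>k. cmod (\<alpha> j (k - j)) / an) | k. k < n})"
  have M_ge: "0 \<le> M" "\<And>k. k < n \<Longrightarrow> c k \<le> M"
    unfolding M_def c_def by (auto intro!: Max_ge)
  have r1_eq: "r1 = max 1 (\<Sum>k<n. c k)" and r2_eq: "r2 = 1 + M"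
    by (simp_all add: r1_def c_def r2_def M_def)
  show ?thesis
  proof (cases "\<forall>k<n. c k = 0")
    case True
    then have "cmod z = 0" if "polyan \<alpha> n z = 0" for z
      using zero_bound[OF that] by (auto simp: q_def power_le_zero_eq)
    then show ?thesis using True M_ge by (simp add: r0_def r1_eq r2_eq)
  next
    case False
    then obtain m where m: "m < n" "c m > 0" using c_nonneg by (metis less_le)
    obtain r where root: "r > 0" "cauchy_poly c n r = 0"
      using cauchy_poly_pos_root_exists[of c m n, OF c_nonneg m] by auto
    interpret cauchy_pos_root c n m r using c_nonneg m root by unfold_locales
    have uniq: "\<exists>!r. r > 0 \<and> q r = 0" using root pos_root_unique q_eq by blast
    then have "r0 = r" using root False by (auto simp: r0_def q_eq)
    moreover have "cmod z \<le> r" if "polyan \<alpha> n z = 0" for z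
      using zero_bound[OF that] le_root q_eq by simp
    moreover have "r \<le> r1" unfolding r1_eq
      using cauchy_poly_max_1_sum_nonneg[of c] c_nonneg by (intro root_le) auto
    moreover have "r \<le> r2" unfolding r2_eq
      using cauchy_poly_1_plus_bound_ge_1[of M n c] M_ge by (intro root_le) auto
    ultimately show ?thesis using uniq False by auto
  qed
qed

end
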